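(* Let $\ell\in\mathbb{N}$ be fixed. Let $G\in\mathcal{G}_{k,n,p}$ and $v\neq w\in V(G)$, and let $X=X_0,X_1,\dots$ be a simple random walk on $G$ starting at $w$. Then \[ H_{wv}=\ell+H_{\mu_\ell v}-\frac{2|E(G)|}{d(v)}\sum_{i=1}^{\ell-1}\mathbb{P}_w[X_i=v]\pm\mathcal{O}\!\left(\frac1{pn}\right). \]
   Context: Fix an integer $k\ge2$ and let $p=p(n)$ satisfy $\frac{\log n}{n^{(k-1)/k}}\le p\le 1-\Omega(\frac{\log^4 n}{n})$. $\mathcal{G}_{k,n,p}$ denotes the set of graphs $G$ on $n$ vertices satisfying: (i) $G$ is not bipartite; (ii) $\operatorname{diam}(G)\le k$; (iii) every vertex has degree $d(v)=pn\pm\mathcal{O}(\sqrt{pn\log n})$; (iv) $2|E(G)|=pn^2\pm\mathcal{O}(\sqrt{pn^2\log n})$; (v) $|N(v)\cap N(w)|=p^2n\pm\mathcal{O}(\max\{\sqrt{p^2n\log n},\log n\})$ for all $v\ne w$; (vi) the unit eigenvector $\phi$ of the largest adjacency eigenvalue has entries $\phi_i=\frac1{\sqrt n}\pm\mathcal{O}(\frac{\log^{3/2}n}{\sqrt p\,n\log(pn)})$; (vii) $\lambda_1=(1+o(1))pn$; (viii) $\max\{|\lambda_2|,|\lambda_n|\}=\mathcal{O}(\sqrt{pn})$, where $\lambda_1\ge\dots\ge\lambda_n$ are the adjacency eigenvalues. Asymptotic notation is as $n\to\infty$ with constants independent of $n$. $\mathbb{P}_w[\cdot]=\mathbb{P}[\cdot\mid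 X_0=w]$; $\mu_\ell(x)=\mathbb{P}_w[X_\ell=x]$; $H_{uv}$ is the expected first hitting time of $v$ from $u$ ($H_{vv}=0$) and $H_{\mu_\ell v}=\sum_u\mu_\ell(u)H_{uv}$. *)

theory Defs
  imports Complex_Main "Jordan_Normal_Form.Char_Poly"
begin

definition simple_graph :: "nat \<Rightarrow> (nat \<Rightarrow> nat \<Rightarrow> bool) \<Rightarrow> bool" where
  "simple_graph n E \<longleftrightarrow> (\<forall>u x. E u x \<longrightarrow> u < n \<and> x < n \<and> u \<noteq> x \<and> E x u)"

definition deg :: "nat \<Rightarrow> (nat \<Rightarrow> nat \<Rightarrow> bool) \<Rightarrow> nat \<Rightarrow> nat" where
  "deg n E v = card {u. u < n \<and> E v u}"

definition num_edges :: "nat \<Rightarrow> (nat \<Rightarrow> nat \<Rightarrow> bool) \<Rightarrow> nat" where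
  "num_edges n E = card {{u, x} | u x. u < n \<and> x < n \<and> E u x}"

definition codeg :: "nat \<Rightarrow> (nat \<Rightarrow> nat \<Rightarrow> bool) \<Rightarrow> nat \<Rightarrow> nat \<Rightarrow> nat" where
  "codeg n E v w = card {u. u < n \<and> E v u \<and> E w u}"

definition bipartite :: "nat \<Rightarrow> (nat \<Rightarrow> nat \<Rightarrow> bool) \<Rightarrow> bool" where
  "bipartite n E \<longleftrightarrow> (\<exists>side :: nat \<Rightarrow> bool. \<forall>u x. u < n \<longrightarrow> x < n \<longrightarrow> E u x \<longrightarrow> side u \<noteq> side x)"

definition has_walk :: "(nat \<Rightarrow> nat \<Rightarrow> bool) \<Rightarrow> nat \<Rightarrow> nat \<Rightarrow> nat \<Rightarrow> bool" where
  "has_walk E m u v \<longleftrightarrow> (\<exists>f :: nat \<Rightarrow> nat. f 0 = u \<and> f m = v \<and> (\<forall>i<m. E (f i) (f (Suc i))))"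

definition diam_le :: "nat \<Rightarrow> (nat \<Rightarrow> nat \<Rightarrow> bool) \<Rightarrow> nat \<Rightarrow> bool" where
  "diam_le n E k \<longleftrightarrow> (\<forall>u v. u < n \<longrightarrow> v < n \<longrightarrow> (\<exists>m\<le>k. has_walk E m u v))"

definition adj_mat :: "nat \<Rightarrow> (nat \<Rightarrow> nat \<Rightarrow> bool) \<Rightarrow> real mat" where
  "adj_mat n E = mat n n (\<lambda>(i, j). if E i j then 1 else 0)"

text \<open>lams is the list of adjacency eigenvalues (with multiplicity) in non-increasing order
  lambda_1 \<ge> ... \<ge> lambda_n.\<close>
definition adj_eigenvalues :: "nat \<Rightarrow> (nat \<Rightarrow> nat \<Rightarrow> bool) \<Rightarrow> real list \<Rightarrow> bool" where
  "adj_eigenvalues n E lams \<longleftrightarrow> length lams = n \<and> sorted (rev lams) \<and>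
     char_poly (adj_mat n E) = (\<Prod>a\<leftarrow>lams. [:- a, 1:])"

definition trans :: "nat \<Rightarrow> (nat \<Rightarrow> nat \<Rightarrow> bool) \<Rightarrow> nat \<Rightarrow> nat \<Rightarrow> real" where
  "trans n E u x = (if E u x then 1 / real (deg n E u) else 0)"

text \<open>walk_dist n E w t x = P_w[X_t = x], i.e. mu_t(x).\<close>
fun walk_dist :: "nat \<Rightarrow> (nat \<Rightarrow> nat \<Rightarrow> bool) \<Rightarrow> nat \<Rightarrow> nat \<Rightarrow> nat \<Rightarrow> real" where
  "walk_dist n E w 0 x = (if x = w then 1 else 0)"
| "walk_dist n E w (Suc t) y = (\<Sum>x<n. walk_dist n E w t x * trans n E x y)"

text \<open>surv n E u v t x = P_u[X_t = x and X_s \<noteq> v for all s \<le> t].\<close>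
fun surv :: "nat \<Rightarrow> (nat \<Rightarrow> nat \<Rightarrow> bool) \<Rightarrow> nat \<Rightarrow> nat \<Rightarrow> nat \<Rightarrow> nat \<Rightarrow> real" where
  "surv n E u v 0 x = (if x = u \<and> u \<noteq> v then 1 else 0)"
| "surv n E u v (Suc t) y = (if y = v then 0 else (\<Sum>x<n. surv n E u v t x * trans n E x y))"

text \<open>Expected first hitting time H_{uv} = E_u[tau_v] = sum_{t \<ge> 0} P_u[tau_v > t],
  where tau_v = min {t \<ge> 0. X_t = v}; in particular H_{vv} = 0.\<close>
definition hit_time :: "nat \<Rightarrow> (nat \<Rightarrow> nat \<Rightarrow> bool) \<Rightarrow> nat \<Rightarrow> nat \<Rightarrow> real" where
  "hit_time n E u v = (\<Sum>t. \<Sum>x<n. surv n E u v t x)"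

text \<open>The class G_{k,n,p}. The implicit constant of every O(.) is C, and the o(1) in (vii)
  is bounded by delta n.\<close>
definition in_class :: "nat \<Rightarrow> real \<Rightarrow> (nat \<Rightarrow> real) \<Rightarrow> nat \<Rightarrow> real \<Rightarrow> (nat \<Rightarrow> nat \<Rightarrow> bool) \<Rightarrow> bool" where
  "in_class k C delta n p E \<longleftrightarrow>
     simple_graph n E \<and>
     \<not> bipartite n E \<and>
     diam_le n E k \<and>
     (\<forall>v<n. \<bar>real (deg n E v) - p * n\<bar> \<le> C * sqrt (p * n * ln n)) \<and>
     \<bar>2 * real (num_edges n E) - p * n^2\<bar> \<le> C * sqrt (p * n^2 * ln n) \<and>
     (\<forall>v<n. \<forall>w<n. v \<noteq> w \<longrightarrow>
        \<bar>real (codeg n E v w) - p^2 * n\<bar> \<le> C * max (sqrt (p^2 * n * ln n)) (ln n)) \<and>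
     (\<exists>lams. adj_eigenvalues n E lams \<and>
        (\<exists>phi :: nat \<Rightarrow> real.
           (\<Sum>i<n. (phi i)^2) = 1 \<and>
           (\<forall>i<n. (\<Sum>j<n. adj_mat n E $$ (i, j) * phi j) = lams ! 0 * phi i) \<and>
           (\<forall>i<n. \<bar>phi i - 1 / sqrt n\<bar> \<le> C * (ln n) powr (3/2) / (sqrt p * n * ln (p * n)))) \<and>
        \<bar>lams ! 0 - p * n\<bar> \<le> delta n * (p * n) \<and>
        max \<bar>lams ! 1\<bar> \<bar>lams ! (n - 1)\<bar> \<le> C * sqrt (p * n))"

end

theory Submission
  imports Defs
begin

(* Write h(x) = H_{xv}. First-step analysis gives h(x) = 1 + sum_y P(x,y) h(y) for x \<noteq> v,
  while at x = v the right-hand side is the expected return time R_v, which Kac's formula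
  (average against the stationary degree measure) identifies as 2|E(G)|/d(v). Hence
  E_w[h(X_{s+1})] = E_w[h(X_s)] - 1 + R_v P_w[X_s = v], and summing over s < l gives the formula
  exactly, so the error term is 0; the term s = 0 drops out because v \<noteq> w. Of the properties of
  G only diam(G) \<le> k is used: it lets the walk reach v from everywhere, so the probability of
  not having hit v decays geometrically and all hitting times are finite. *)

(* surv_mass n E u v t = P_u[tau_v > t] *)
definition surv_mass :: "nat \<Rightarrow> (nat \<Rightarrow> nat \<Rightarrow> bool) \<Rightarrow> nat \<Rightarrow> nat \<Rightarrow> nat \<Rightarrow> real" where
  "surv_mass n E u v t = (\<Sum>x<n. surv n E u v t x)"

definition return_time :: "nat \<Rightarrow> (nat \<Rightarrow> nat \<Rightarrow> bool) \<Rightarrow> nat \<Rightarrow> real" where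
  "return_time n E v = 1 + (\<Sum>y<n. trans n E v y * hit_time n E y v)"

lemma hit_time_eq_suminf: "hit_time n E u v = suminf (surv_mass n E u v)"
  by (simp add: hit_time_def surv_mass_def[abs_def])

lemma surv_nonneg: "0 \<le> surv n E u v t x"
  by (induction t arbitrary: x) (auto simp: trans_def intro!: sum_nonneg)

lemma surv_mass_nonneg: "0 \<le> surv_mass n E u v t"
  by (simp add: surv_mass_def sum_nonneg surv_nonneg)

lemma surv_at_target [simp]: "surv n E u v t v = 0"
  by (cases t) auto

lemma surv_mass_from_target [simp]: "surv_mass n E v v t = 0"
proof -
  have "surv n E v v t x = 0" for x
    by (induction t arbitrary: x) auto
  then show ?thesis
    by (simp add: surv_mass_def)
qed

lemma surv_mass_0: "u < n \<Longrightarrow> surv_mass n E u v 0 = (if u = v then 0 else 1)"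
  by (cases "u = v") (simp_all add: surv_mass_def)

lemma trans_nonneg: "0 \<le> trans n E x y"
  by (simp add: trans_def)

lemma sum_trans_row:
  assumes "0 < deg n E u"
  shows "(\<Sum>y<n. trans n E u y) = 1"
proof -
  have "{..<n} \<inter> {y. E u y} = {y. y < n \<and> E u y}"
    by auto
  then show ?thesis
    using assms by (simp add: trans_def sum.If_cases deg_def card_gt_0_iff)
qed

lemma summable_if_geometric_on_multiples:
  fixes f :: "nat \<Rightarrow> real"
  assumes nonneg: "\<And>t. 0 \<le> f t" and dec: "decseq f"
    and K: "0 < K" and q: "q < 1" and geom: "\<And>j. f (j * K) \<le> q ^ j"
  shows "summable f"
proof -
  define r where "r = max q (1/2)"
  have r: "0 < r" "r < 1" "q \<le> r"
    using q unfolding r_def by auto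
  have "0 \<le> q"
    using nonneg[of "1 * K"] geom[of 1] by simp
  define \<rho> where "\<rho> = root K r"
  have \<rho>: "0 < \<rho>" "\<rho> < 1" "\<rho> ^ K = r"
    unfolding \<rho>_def using r K by (auto simp: real_root_lt_1_iff)
  have bound: "f t \<le> \<rho> ^ t / \<rho> ^ K" for t
  proof -
    have "f t \<le> f (t div K * K)"
      by (rule decseqD[OF dec]) (rule div_times_less_eq_dividend)
    also have "\<dots> \<le> r ^ (t div K)"
      using geom[of "t div K"] power_mono[OF r(3) \<open>0 \<le> q\<close>, of "t div K"] by linarith
    also have "\<dots> = \<rho> ^ (K * (t div K))"
      unfolding power_mult \<rho>(3) ..
    also have "\<dots> \<le> \<rho> ^ t / \<rho> ^ K"
    proof -
      have "t \<le> K * (t div K) + K"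
        using mult_div_mod_eq[of K t] mod_less_divisor[OF K, of t] by linarith
      then have "\<rho> ^ (K * (t div K) + K) \<le> \<rho> ^ t"
        using \<rho>(1,2) by (intro power_decreasing) auto
      then have "\<rho> ^ (K * (t div K)) * \<rho> ^ K \<le> \<rho> ^ t"
        by (simp only: power_add)
      then show ?thesis
        using \<rho>(1) by (simp add: pos_le_divide_eq)
    qed
    finally show ?thesis .
  qed
  have "summable (\<lambda>t. \<rho> ^ t / \<rho> ^ K)"
    using \<rho>(1,2) by (intro summable_divide summable_geometric) auto
  then show ?thesis
    by (rule summable_comparison_test'[where N = 0]) (simp add: nonneg bound)
qed

locale sgraph =
  fixes n :: nat and E :: "nat \<Rightarrow> nat \<Rightarrow> bool"
  assumes simple: "simple_graph n E"
begin

lemma edgeD: "E a b \<Longrightarrow> a < n \<and> b < n \<and> a \<noteq> b \<and> E b a"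
  using simple unfolding simple_graph_def by blast

lemma trans_outside: "n \<le> y \<Longrightarrow> trans n E x y = 0"
  using edgeD[of x y] by (auto simp: trans_def)

lemma surv_first_step:
  assumes "u < n"
  shows "surv n E u v (Suc t) x = (if u = v then 0 else (\<Sum>y<n. trans n E u y * surv n E y v t x))"
  using assms
proof (induction t arbitrary: x)
  case 0
  have "(\<Sum>y<n. surv n E u v 0 y * trans n E y x) = (if u = v then 0 else trans n E u x)"
  proof (cases "u = v")
    case False
    have "(\<Sum>y<n. surv n E u v 0 y * trans n E y x) = (\<Sum>y<n. if y = u then trans n E y x else 0)"
      using False by (intro sum.cong) auto
    then show ?thesis
      using 0 False by simp
  qed simp
  moreover have "(\<Sum>y<n. trans n E u y * surv n E y v 0 x) = (if x < n \<and> x \<noteq> v then trans n E u x else 0)"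
  proof -
    have "(\<Sum>y<n. trans n E u y * surv n E y v 0 x) = (\<Sum>y<n. if y = x then (if x \<noteq> v then trans n E u x else 0) else 0)"
      by (intro sum.cong) auto
    then show ?thesis
      by simp
  qed
  ultimately show ?case
    using trans_outside[of x u] by auto
next
  case (Suc t)
  have "surv n E u v (Suc (Suc t)) x =
      (if x = v then 0 else (\<Sum>z<n. surv n E u v (Suc t) z * trans n E z x))"
    by simp
  also have "\<dots> = (if x = v then 0 else
      (\<Sum>z<n. (if u = v then 0 else (\<Sum>y<n. trans n E u y * surv n E y v t z)) * trans n E z x))"
    using Suc by simp
  also have "\<dots> = (if u = v then 0 else (\<Sum>y<n. trans n E u y * surv n E y v (Suc t) x))"
    by (auto simp: sum_distrib_left sum_distrib_right mult.assoc intro: sum.swap)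
  finally show ?case .
qed

lemma surv_mass_first_step:
  assumes "u < n"
  shows "surv_mass n E u v (Suc t) = (if u = v then 0 else (\<Sum>y<n. trans n E u y * surv_mass n E y v t))"
  using surv_first_step[OF assms]
  by (auto simp: surv_mass_def sum_distrib_left intro: sum.swap)

lemma sum_deg: "(\<Sum>x<n. deg n E x) = 2 * num_edges n E"
proof -
  define A where "A = {(a, b). a < n \<and> b < n \<and> E a b}"
  define Ed where "Ed = {{a, b} | a b. a < n \<and> b < n \<and> E a b}"
  define fib where "fib e = {p \<in> A. {fst p, snd p} = e}" for e
  have "(\<Sum>x<n. deg n E x) = card (SIGMA x:{..<n}. {y. y < n \<and> E x y})"
    by (simp add: deg_def)
  also have "(SIGMA x:{..<n}. {y. y < n \<and> E x y}) = \<Union> (fib ` Ed)"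
    unfolding A_def Ed_def fib_def by fastforce
  also have "card (\<Union> (fib ` Ed)) = (\<Sum>e\<in>Ed. card (fib e))"
  proof (rule card_UN_disjoint)
    have "Ed \<subseteq> Pow {..<n}"
      unfolding Ed_def by auto
    then show "finite Ed"
      by (rule finite_subset) simp
    have "A \<subseteq> {..<n} \<times> {..<n}"
      unfolding A_def by auto
    then have "finite A"
      by (rule finite_subset) simp
    then show "\<forall>e\<in>Ed. finite (fib e)"
      unfolding fib_def by auto
    show "\<forall>e\<in>Ed. \<forall>e'\<in>Ed. e \<noteq> e' \<longrightarrow> fib e \<inter> fib e' = {}"
      unfolding fib_def by auto
  qed
  also have "(\<Sum>e\<in>Ed. card (fib e)) = (\<Sum>e\<in>Ed. 2)"
  proof (intro sum.cong refl)
    fix e assume "e \<in> Ed"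
    then obtain a b where ab: "e = {a, b}" "a < n" "b < n" "E a b"
      unfolding Ed_def by blast
    then have "a \<noteq> b" "E b a"
      using edgeD by auto
    moreover have "fib e = {(a, b), (b, a)}"
      unfolding fib_def A_def using ab \<open>E b a\<close> by (auto simp: doubleton_eq_iff)
    ultimately show "card (fib e) = 2"
      by simp
  qed
  also have "\<dots> = 2 * num_edges n E"
    unfolding Ed_def num_edges_def by simp
  finally show ?thesis .
qed

lemma deg_mult_trans: "real (deg n E x) * trans n E x y = (if E y x then 1 else 0)"
proof (cases "E x y")
  case True
  then have "y \<in> {z. z < n \<and> E x z}"
    using edgeD by blast
  then have "deg n E x \<noteq> 0"
    unfolding deg_def by (metis card_0_eq empty_iff finite_Collect_conjI finite_Collect_less_nat)
  then show ?thesis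
    using True edgeD[OF True] by (simp add: trans_def)
next
  case False
  then show ?thesis
    using edgeD[of y x] by (auto simp: trans_def)
qed

lemma deg_stationary:
  assumes "y < n"
  shows "(\<Sum>x<n. real (deg n E x) * trans n E x y) = real (deg n E y)"
proof -
  have "(\<Sum>x<n. real (deg n E x) * trans n E x y) = (\<Sum>x<n. if E y x then 1 else 0)"
    by (simp add: deg_mult_trans)
  also have "{..<n} \<inter> {x. E y x} = {x. x < n \<and> E y x}"
    by auto
  then have "(\<Sum>x<n. if E y x then 1 else 0) = real (deg n E y)"
    by (simp add: sum.If_cases deg_def)
  finally show ?thesis .
qed

lemma deg_pos_if_walk:
  assumes "has_walk E m u z" "u \<noteq> z"
  shows "0 < deg n E u"
proof -
  obtain f where f: "f 0 = u" "f m = z" "\<forall>i<m. E (f i) (f (Suc i))"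
    using assms(1) unfolding has_walk_def by blast
  then have "m \<noteq> 0"
    using assms(2) by (cases m) auto
  then have "E u (f 1)"
    using f by auto
  then have "f 1 \<in> {y. y < n \<and> E u y}"
    using edgeD by blast
  then show ?thesis
    unfolding deg_def by (auto simp: card_gt_0_iff)
qed

end

locale rw_graph = sgraph +
  assumes no_isolated: "\<And>u. u < n \<Longrightarrow> 0 < deg n E u"
begin

lemma sum_trans: "u < n \<Longrightarrow> (\<Sum>y<n. trans n E u y) = 1"
  by (rule sum_trans_row[OF no_isolated])

lemma trans_average_le:
  assumes "u < n" "\<And>y. y < n \<Longrightarrow> f y \<le> c"
  shows "(\<Sum>y<n. trans n E u y * f y) \<le> c"
proof -
  have "(\<Sum>y<n. trans n E u y * f y) \<le> (\<Sum>y<n. trans n E u y * c)"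
    using assms(2) by (intro sum_mono mult_left_mono trans_nonneg) auto
  also have "\<dots> = c"
    using sum_trans[OF assms(1)] by (simp add: sum_distrib_right[symmetric])
  finally show ?thesis .
qed

lemma sum_walk_dist: "w < n \<Longrightarrow> (\<Sum>x<n. walk_dist n E w t x) = 1"
proof (induction t)
  case (Suc t)
  have "(\<Sum>y<n. walk_dist n E w (Suc t) y) = (\<Sum>x<n. walk_dist n E w t x * (\<Sum>y<n. trans n E x y))"
    by (simp add: sum_distrib_left) (rule sum.swap)
  also have "\<dots> = (\<Sum>x<n. walk_dist n E w t x)"
    by (simp add: sum_trans)
  finally show ?case
    using Suc by simp
qed simp

lemma surv_mass_le_1: "u < n \<Longrightarrow> surv_mass n E u v t \<le> 1"
proof (induction t arbitrary: u)
  case (Suc t)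
  then show ?case
    using trans_average_le[OF Suc.prems Suc.IH] by (simp add: surv_mass_first_step)
qed (simp add: surv_mass_0)

lemma surv_mass_Suc_le: "u < n \<Longrightarrow> surv_mass n E u v (Suc t) \<le> surv_mass n E u v t"
proof (induction t arbitrary: u)
  case 0
  then show ?case
    using surv_mass_le_1[of u v 1] by (simp add: surv_mass_0)
next
  case (Suc t)
  have "(\<Sum>y<n. trans n E u y * surv_mass n E y v (Suc t)) \<le> (\<Sum>y<n. trans n E u y * surv_mass n E y v t)"
    using Suc.IH by (intro sum_mono mult_left_mono trans_nonneg) auto
  then show ?case
    using Suc.prems by (simp add: surv_mass_first_step)
qed

lemma decseq_surv_mass: "u < n \<Longrightarrow> decseq (surv_mass n E u v)"
  by (intro decseq_SucI surv_mass_Suc_le)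

lemma surv_mass_less_1_if_walk: "has_walk E m u v \<Longrightarrow> u < n \<Longrightarrow> surv_mass n E u v m < 1"
proof (induction m arbitrary: u)
  case 0
  then have "u = v"
    by (auto simp: has_walk_def)
  then show ?case
    by simp
next
  case (Suc m)
  obtain f where f: "f 0 = u" "f (Suc m) = v" "\<forall>i<Suc m. E (f i) (f (Suc i))"
    using Suc.prems(1) unfolding has_walk_def by blast
  have edge: "E u (f 1)"
    using f by auto
  have "has_walk E m (f 1) v"
    unfolding has_walk_def using f by (intro exI[of _ "\<lambda>i. f (Suc i)"]) auto
  then have less: "surv_mass n E (f 1) v m < 1"
    using Suc.IH edgeD[OF edge] by blast
  show ?case
  proof (cases "u = v")
    case False
    have "(\<Sum>y<n. trans n E u y * surv_mass n E y v m) < (\<Sum>y<n. trans n E u y * 1)"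
    proof (rule sum_strict_mono_ex1)
      show "\<forall>y\<in>{..<n}. trans n E u y * surv_mass n E y v m \<le> trans n E u y * 1"
        by (auto intro!: mult_left_le surv_mass_le_1 trans_nonneg)
      have "0 < trans n E u (f 1)"
        using edge no_isolated[OF Suc.prems(2)] by (simp add: trans_def)
      then show "\<exists>y\<in>{..<n}. trans n E u y * surv_mass n E y v m < trans n E u y * 1"
        using edgeD[OF edge] less by (intro bexI[of _ "f 1"]) auto
    qed simp
    then show ?thesis
      using False Suc.prems(2) sum_trans by (simp add: surv_mass_first_step)
  qed simp
qed

lemma surv_mass_add_le:
  assumes "\<And>y. y < n \<Longrightarrow> surv_mass n E y v t \<le> c" "u < n"
  shows "surv_mass n E u v (s + t) \<le> c * surv_mass n E u v s"
  using assms(2)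
proof (induction s arbitrary: u)
  case 0
  then show ?case
    using assms(1) by (simp add: surv_mass_0)
next
  case (Suc s)
  have "(\<Sum>y<n. trans n E u y * surv_mass n E y v (s + t)) \<le> (\<Sum>y<n. trans n E u y * (c * surv_mass n E y v s))"
    using Suc.IH by (intro sum_mono mult_left_mono trans_nonneg) auto
  then show ?case
    using Suc.prems by (simp add: surv_mass_first_step sum_distrib_left algebra_simps)
qed

end

locale rw_hitting = rw_graph +
  fixes v :: nat
  assumes target: "v < n"
    and reachable: "\<And>u. u < n \<Longrightarrow> \<exists>m. has_walk E m u v"
begin

lemma uniform_escape: "\<exists>K>0. \<forall>u<n. surv_mass n E u v K < 1"
proof -
  define m where "m u = (SOME m. has_walk E m u v)" for u
  define K where "K = Suc (Max (m ` {..<n}))"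
  have "surv_mass n E u v K < 1" if u: "u < n" for u
  proof -
    have "has_walk E (m u) u v"
      unfolding m_def using reachable[OF u] by (rule someI_ex)
    moreover have "m u \<le> K"
      unfolding K_def using u by (intro le_SucI Max_ge) auto
    ultimately show ?thesis
      using decseqD[OF decseq_surv_mass[OF u]] surv_mass_less_1_if_walk[OF _ u] by (meson le_less_trans)
  qed
  then show ?thesis
    unfolding K_def by blast
qed

lemma surv_mass_geometric: "\<exists>K>0. \<exists>q<1. \<forall>u<n. \<forall>j. surv_mass n E u v (j * K) \<le> q ^ j"
proof -
  obtain K where K: "0 < K" "\<And>u. u < n \<Longrightarrow> surv_mass n E u v K < 1"
    using uniform_escape by blast
  define q where "q = Max ((\<lambda>u. surv_mass n E u v K) ` {..<n})"
  have q_ge: "surv_mass n E u v K \<le> q" if "u < n" for u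
    unfolding q_def using that by (intro Max_ge) auto
  have "q < 1"
    unfolding q_def using target K(2) by (subst Max_less_iff) auto
  have "0 \<le> q"
    using q_ge[OF target] surv_mass_nonneg[of n E v v K] by linarith
  have "surv_mass n E u v (j * K) \<le> q ^ j" if "u < n" for u j
    using that
  proof (induction j arbitrary: u)
    case 0
    then show ?case
      by (simp add: surv_mass_le_1)
  next
    case (Suc j)
    have "surv_mass n E u v (K + j * K) \<le> q ^ j * surv_mass n E u v K"
      by (rule surv_mass_add_le[OF Suc.IH Suc.prems])
    also have "\<dots> \<le> q ^ j * q"
      using q_ge[OF Suc.prems] \<open>0 \<le> q\<close> by (intro mult_left_mono) auto
    finally show ?case
      by (simp add: add.commute mult.commute)
  qed
  then show ?thesis
    using K(1) \<open>q < 1\<close> by blast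
qed

lemma summable_surv_mass: "u < n \<Longrightarrow> summable (surv_mass n E u v)"
  using surv_mass_geometric
  by (metis summable_if_geometric_on_multiples surv_mass_nonneg decseq_surv_mass)

lemma hit_time_first_step:
  assumes u: "u < n"
  shows "hit_time n E u v = (if u = v then 0 else 1 + (\<Sum>y<n. trans n E u y * hit_time n E y v))"
proof (cases "u = v")
  case True
  then have "surv_mass n E u v = (\<lambda>_. 0)"
    by auto
  then show ?thesis
    using True by (simp add: hit_time_eq_suminf)
next
  case False
  have "hit_time n E u v = surv_mass n E u v 0 + (\<Sum>t. surv_mass n E u v (Suc t))"
    unfolding hit_time_eq_suminf using suminf_split_head[OF summable_surv_mass[OF u]] by simp
  also have "(\<Sum>t. surv_mass n E u v (Suc t)) = (\<Sum>t. \<Sum>y<n. trans n E u y * surv_mass n E y v t)"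
    using False by (simp add: surv_mass_first_step[OF u])
  also have "\<dots> = (\<Sum>y<n. \<Sum>t. trans n E u y * surv_mass n E y v t)"
    by (rule suminf_sum) (auto intro!: summable_mult summable_surv_mass)
  also have "\<dots> = (\<Sum>y<n. trans n E u y * hit_time n E y v)"
    unfolding hit_time_eq_suminf by (intro sum.cong refl suminf_mult summable_surv_mass) auto
  finally show ?thesis
    using False u by (simp add: surv_mass_0)
qed

lemma trans_average_hit_time:
  assumes "x < n"
  shows "(\<Sum>y<n. trans n E x y * hit_time n E y v) =
    hit_time n E x v - 1 + (if x = v then return_time n E v else 0)"
  using hit_time_first_step[OF assms] hit_time_first_step[OF target]
  by (cases "x = v") (simp_all add: return_time_def)

lemma expected_hit_time_step:
  assumes "w < n"
  shows "(\<Sum>y<n. walk_dist n E w (Suc s) y * hit_time n E y v) =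
    (\<Sum>x<n. walk_dist n E w s x * hit_time n E x v) - 1 + return_time n E v * walk_dist n E w s v"
proof -
  have "(\<Sum>y<n. walk_dist n E w (Suc s) y * hit_time n E y v) =
      (\<Sum>x<n. walk_dist n E w s x * (\<Sum>y<n. trans n E x y * hit_time n E y v))"
    by (simp add: sum_distrib_left sum_distrib_right mult.assoc) (rule sum.swap)
  also have "\<dots> = (\<Sum>x<n. walk_dist n E w s x * hit_time n E x v - walk_dist n E w s x +
      (if x = v then return_time n E v * walk_dist n E w s v else 0))"
    by (intro sum.cong refl, subst trans_average_hit_time) (auto simp: algebra_simps)
  also have "\<dots> = (\<Sum>x<n. walk_dist n E w s x * hit_time n E x v) - 1 + return_time n E v * walk_dist n E w s v"
    using target sum_walk_dist[OF assms] by (simp add: sum.distrib sum_subtractf)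
  finally show ?thesis .
qed

lemma hit_time_walk_identity:
  assumes "w < n"
  shows "hit_time n E w v = real l + (\<Sum>u<n. walk_dist n E w l u * hit_time n E u v)
    - return_time n E v * (\<Sum>s<l. walk_dist n E w s v)"
proof (induction l)
  case 0
  have "(\<Sum>u<n. walk_dist n E w 0 u * hit_time n E u v) = (\<Sum>u<n. if u = w then hit_time n E w v else 0)"
    by (intro sum.cong) auto
  then show ?case
    using assms by simp
next
  case (Suc l)
  then show ?case
    using expected_hit_time_step[OF assms, of l] by (simp add: algebra_simps)
qed

lemma return_time_kac: "return_time n E v = 2 * real (num_edges n E) / real (deg n E v)"
proof -
  let ?d = "\<lambda>x. real (deg n E x)" and ?h = "\<lambda>x. hit_time n E x v"
  have "(\<Sum>x<n. ?d x * (\<Sum>y<n. trans n E x y * ?h y)) = (\<Sum>y<n. (\<Sum>x<n. ?d x * trans n E x y) * ?h y)"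
    by (simp add: sum_distrib_left sum_distrib_right mult.assoc) (rule sum.swap)
  also have "\<dots> = (\<Sum>y<n. ?d y * ?h y)"
    by (simp add: deg_stationary)
  finally have stationary: "(\<Sum>x<n. ?d x * (\<Sum>y<n. trans n E x y * ?h y)) = (\<Sum>y<n. ?d y * ?h y)" .
  have "(\<Sum>x<n. ?d x * (\<Sum>y<n. trans n E x y * ?h y)) =
      (\<Sum>x<n. ?d x * ?h x - ?d x + (if x = v then ?d v * return_time n E v else 0))"
    by (intro sum.cong refl, subst trans_average_hit_time) (auto simp: algebra_simps)
  also have "\<dots> = (\<Sum>x<n. ?d x * ?h x) - (\<Sum>x<n. ?d x) + ?d v * return_time n E v"
    using target by (simp add: sum.distrib sum_subtractf)
  finally have "?d v * return_time n E v = (\<Sum>x<n. ?d x)"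
    using stationary by simp
  also have "\<dots> = 2 * real (num_edges n E)"
    by (metis sum_deg of_nat_mult of_nat_numeral of_nat_sum)
  finally show ?thesis
    using no_isolated[OF target] by (simp add: field_simps)
qed

lemma hit_time_formula:
  assumes "w < n" "v \<noteq> w"
  shows "hit_time n E w v = real l + (\<Sum>u<n. walk_dist n E w l u * hit_time n E u v)
    - 2 * real (num_edges n E) / real (deg n E v) * (\<Sum>i\<in>{1..<l}. walk_dist n E w i v)"
proof -
  have "(\<Sum>s<l. walk_dist n E w s v) = (\<Sum>i\<in>{1..<l}. walk_dist n E w i v)"
  proof (cases l)
    case (Suc l')
    then have "{..<l} = insert 0 {1..<l}"
      by auto
    then show ?thesis
      using assms(2) by simp
  qed simp
  then show ?thesis
    using hit_time_walk_identity[OF assms(1), of l] by (simp add: return_time_kac)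
qed

end

theorem lemma5p1:
  fixes k l :: nat and p :: "nat \<Rightarrow> real" and c C :: real and delta :: "nat \<Rightarrow> real"
  assumes "k \<ge> 2"
    and "c > 0"
    and "delta \<longlonglongrightarrow> 0"
    and "\<forall>\<^sub>F n in sequentially. ln n / real n powr ((real k - 1) / real k) \<le> p n \<and>
                                  p n \<le> 1 - c * (ln n)^4 / n"
  shows "\<exists>D N. \<forall>n \<ge> N. \<forall>E v w. in_class k C delta n (p n) E \<longrightarrow> v < n \<longrightarrow> w < n \<longrightarrow> v \<noteq> w \<longrightarrow>
           \<bar>hit_time n E w v -
             (l + (\<Sum>u<n. walk_dist n E w l u * hit_time n E u v)
              - 2 * real (num_edges n E) / real (deg n E v) * (\<Sum>i\<in>{1..<l}. walk_dist n E w i v))\<bar>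
           \<le> D / (p n * n)"
proof (intro exI[of _ "0::real"] exI[of _ "0::nat"] allI impI)
  fix n E v w
  assume G: "in_class k C delta n (p n) E" and v: "v < n" and w: "w < n" and vw: "v \<noteq> w"
  have simple: "simple_graph n E" and "diam_le n E k"
    using G unfolding in_class_def by auto
  then have walk: "\<exists>m. has_walk E m x z" if "x < n" "z < n" for x z
    using that unfolding diam_le_def by blast
  interpret sgraph n E
    using simple by (rule sgraph.intro)
  have no_isolated: "0 < deg n E x" if x: "x < n" for x
  proof -
    obtain z where z: "z < n" "x \<noteq> z"
      using v w vw by (cases "x = v") auto
    then obtain m where "has_walk E m x z"
      using walk x by blast
    then show ?thesis
      using z(2) by (rule deg_pos_if_walk)
  qed
  interpret rw_hitting n E v
    by unfold_locales (use simple no_isolated v walk in auto)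
  show "\<bar>hit_time n E w v - (l + (\<Sum>u<n. walk_dist n E w l u * hit_time n E u v)
      - 2 * real (num_edges n E) / real (deg n E v) * (\<Sum>i\<in>{1..<l}. walk_dist n E w i v))\<bar>
      \<le> 0 / (p n * n)"
    using hit_time_formula[OF w vw] by simp
qed

end
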